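(* Let $\Lambda$ be a finite, strongly connected $k$-graph and $y$ an $\mathbb{R}_+$-functor on $\Lambda$. Then the map $\theta\mapsto\mu_{y,\theta}$, from $[0,\infty)$ to the space of Borel probability measures on $\Lambda^\infty$ equipped with the weak* topology (as a subset of the dual of $C(\Lambda^\infty)$), is continuous.
   Context: A $k$-graph is a countable small category $\Lambda$ with a degree functor $d:\Lambda\to\mathbb{N}^k$ satisfying unique factorization: if $d(\lambda)=m+n$ there are unique $\eta,\nu$ with $\lambda=\eta\nu$, $d(\eta)=m$, $d(\nu)=n$. $\Lambda^n=d^{-1}(n)$, $\Lambda^0$ = vertices, $r,s$ range and source, $v\Lambda^nw=\{\lambda\in\Lambda^n:r(\lambda)=v,s(\lambda)=w\}$, $v\Lambda w=\bigcup_n v\Lambda^n w$; $e_i$ standard basis vectors. $\Lambda$ is finite if each $\Lambda^n$ is finite and strongly connected if $v\Lambda w\neq\emptyset$ for all vertices $v,w$. An $\mathbb{R}_+$-functor is $y:\Lambda\to[0,\infty)$ with $y(v)=0$ on vertices and $y(\lambda\nu)=y(\lambda)+y(\nu)$ when $s(\lambda)=r(\nu)$. $B_i(y,\theta)_{v,w}=\sum_{\lambda\in v\Lambda^{e_i}w}e^{-\theta y(\lambda)}$. For $\Lambda$ finite and strongly connected, there is a unique $\xi^{y,\theta}\in(0,\infty)^{\Lambda^0}$ with $\sum_v\xi^{y,\theta}_v=1$ and $B_i(y,\theta)\xi^{y,\theta}=\rho(B_i(y,\theta))\xi^{y,\theta}$ for all $i$, where $\rho$ denotes spectral radius ($>0$).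 $\rho(B(y,\theta))^m:=\prod_i\rho(B_i(y,\theta))^{m_i}$. $\Lambda^\infty$ is the set of degree-preserving functors from $\Omega_k$ (objects $\mathbb{N}^k$, morphisms $(m,n)$ with $m\le n$, $d(m,n)=n-m$) to $\Lambda$, with the compact topology generated by the cylinder sets $Z(\lambda)=\{x: x(0,d(\lambda))=\lambda\}$. $\mu_{y,\theta}$ denotes the unique Borel probability measure on $\Lambda^\infty$ with $\mu_{y,\theta}(Z(\lambda))=e^{-\theta y(\lambda)}\rho(B(y,\theta))^{-d(\lambda)}\xi^{y,\theta}_{s(\lambda)}$ for all $\lambda\in\Lambda$. *)

theory Defs
  imports "HOL-Probability.Probability_Measure"
begin

text \<open>Degrees live in N^k, represented as functions nat => nat vanishing on indices >= k.\<close>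

definition natk :: "nat \<Rightarrow> (nat \<Rightarrow> nat) set" where
  "natk k = {m. \<forall>i\<ge>k. m i = 0}"

definition unitv :: "nat \<Rightarrow> nat \<Rightarrow> nat" where
  "unitv i = (\<lambda>j. if j = i then 1 else 0)"

definition zerok :: "nat \<Rightarrow> nat" where
  "zerok = (\<lambda>_. 0)"

text \<open>A k-graph: a countable small category given by its set of morphisms Mor, range r and
 source s (valued in identity morphisms = objects), composition cmp (cmp a b = ab, defined when
 s a = r b), and a degree functor d into N^k with the unique factorization property.\<close>

definition objs :: "'a set \<Rightarrow> ('a \<Rightarrow> 'a) \<Rightarrow> 'a set" where
  "objs Mor r = r ` Mor"

definition kgraph ::
  "nat \<Rightarrow> 'a set \<Rightarrow> ('a \<Rightarrow> 'a) \<Rightarrow> ('a \<Rightarrow> 'a) \<Rightarrow> ('a \<Rightarrow> 'a \<Rightarrow> 'a) \<Rightarrow> ('a \<Rightarrow> nat \<Rightarrow> nat) \<Rightarrow> bool" where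
  "kgraph k Mor r s cmp d \<longleftrightarrow>
     countable Mor \<and>
     (\<forall>a\<in>Mor. r a \<in> Mor \<and> s a \<in> Mor) \<and>
     s ` Mor \<subseteq> r ` Mor \<and>
     (\<forall>v\<in>objs Mor r. r v = v \<and> s v = v) \<and>
     (\<forall>a\<in>Mor. \<forall>b\<in>Mor. s a = r b \<longrightarrow>
        cmp a b \<in> Mor \<and> r (cmp a b) = r a \<and> s (cmp a b) = s b) \<and>
     (\<forall>a\<in>Mor. cmp (r a) a = a \<and> cmp a (s a) = a) \<and>
     (\<forall>a\<in>Mor. \<forall>b\<in>Mor. \<forall>c\<in>Mor. s a = r b \<longrightarrow> s b = r c \<longrightarrow>
        cmp (cmp a b) c = cmp a (cmp b c)) \<and>
     (\<forall>a\<in>Mor. d a \<in> natk k) \<and>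
     (\<forall>a\<in>Mor. \<forall>b\<in>Mor. s a = r b \<longrightarrow> d (cmp a b) = (\<lambda>i. d a i + d b i)) \<and>
     (\<forall>a\<in>Mor. \<forall>m\<in>natk k. \<forall>n\<in>natk k. d a = (\<lambda>i. m i + n i) \<longrightarrow>
        (\<exists>!p. fst p \<in> Mor \<and> snd p \<in> Mor \<and> s (fst p) = r (snd p) \<and>
              cmp (fst p) (snd p) = a \<and> d (fst p) = m \<and> d (snd p) = n))"

definition finite_kgraph :: "nat \<Rightarrow> 'a set \<Rightarrow> ('a \<Rightarrow> nat \<Rightarrow> nat) \<Rightarrow> bool" where
  "finite_kgraph k Mor d \<longleftrightarrow> (\<forall>n\<in>natk k. finite {a\<in>Mor. d a = n})"

definition strongly_connected :: "'a set \<Rightarrow> ('a \<Rightarrow> 'a) \<Rightarrow> ('a \<Rightarrow> 'a) \<Rightarrow> bool" where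
  "strongly_connected Mor r s \<longleftrightarrow>
     (\<forall>v\<in>objs Mor r. \<forall>w\<in>objs Mor r. \<exists>a\<in>Mor. r a = v \<and> s a = w)"

definition Rplus_functor ::
  "'a set \<Rightarrow> ('a \<Rightarrow> 'a) \<Rightarrow> ('a \<Rightarrow> 'a) \<Rightarrow> ('a \<Rightarrow> 'a \<Rightarrow> 'a) \<Rightarrow> ('a \<Rightarrow> real) \<Rightarrow> bool" where
  "Rplus_functor Mor r s cmp y \<longleftrightarrow>
     (\<forall>a\<in>Mor. 0 \<le> y a) \<and> (\<forall>v\<in>objs Mor r. y v = 0) \<and>
     (\<forall>a\<in>Mor. \<forall>b\<in>Mor. s a = r b \<longrightarrow> y (cmp a b) = y a + y b)"

definition Bmat ::
  "'a set \<Rightarrow> ('a \<Rightarrow> 'a) \<Rightarrow> ('a \<Rightarrow> 'a) \<Rightarrow> ('a \<Rightarrow> nat \<Rightarrow> nat) \<Rightarrow> ('a \<Rightarrow> real) \<Rightarrow> real \<Rightarrow> nat \<Rightarrow> 'a \<Rightarrow> 'a \<Rightarrow> real" where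
  "Bmat Mor r s d y \<theta> i v w = (\<Sum>a\<in>{a\<in>Mor. d a = unitv i \<and> r a = v \<and> s a = w}. exp (- \<theta> * y a))"

definition spectral_radius :: "'a set \<Rightarrow> ('a \<Rightarrow> 'a \<Rightarrow> real) \<Rightarrow> real" where
  "spectral_radius V A = Sup {cmod c | c. \<exists>x :: 'a \<Rightarrow> complex. (\<exists>u\<in>V. x u \<noteq> 0) \<and>
      (\<forall>u\<in>V. (\<Sum>w\<in>V. complex_of_real (A u w) * x w) = c * x u)}"

definition rhoB ::
  "nat \<Rightarrow> 'a set \<Rightarrow> ('a \<Rightarrow> 'a) \<Rightarrow> ('a \<Rightarrow> 'a) \<Rightarrow> ('a \<Rightarrow> nat \<Rightarrow> nat) \<Rightarrow> ('a \<Rightarrow> real) \<Rightarrow> real \<Rightarrow> nat \<Rightarrow> real" where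
  "rhoB k Mor r s d y \<theta> i = spectral_radius (objs Mor r) (Bmat Mor r s d y \<theta> i)"

definition rhoB_pow ::
  "nat \<Rightarrow> 'a set \<Rightarrow> ('a \<Rightarrow> 'a) \<Rightarrow> ('a \<Rightarrow> 'a) \<Rightarrow> ('a \<Rightarrow> nat \<Rightarrow> nat) \<Rightarrow> ('a \<Rightarrow> real) \<Rightarrow> real \<Rightarrow> (nat \<Rightarrow> nat) \<Rightarrow> real" where
  "rhoB_pow k Mor r s d y \<theta> m = (\<Prod>i<k. rhoB k Mor r s d y \<theta> i ^ m i)"

definition is_xi ::
  "nat \<Rightarrow> 'a set \<Rightarrow> ('a \<Rightarrow> 'a) \<Rightarrow> ('a \<Rightarrow> 'a) \<Rightarrow> ('a \<Rightarrow> nat \<Rightarrow> nat) \<Rightarrow> ('a \<Rightarrow> real) \<Rightarrow> real \<Rightarrow> ('a \<Rightarrow> real) \<Rightarrow> bool" where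
  "is_xi k Mor r s d y \<theta> \<xi> \<longleftrightarrow>
     (\<forall>v\<in>objs Mor r. 0 < \<xi> v) \<and> (\<Sum>v\<in>objs Mor r. \<xi> v) = 1 \<and>
     (\<forall>i<k. \<forall>v\<in>objs Mor r.
        (\<Sum>w\<in>objs Mor r. Bmat Mor r s d y \<theta> i v w * \<xi> w) = rhoB k Mor r s d y \<theta> i * \<xi> v)"

text \<open>Infinite paths: degree-preserving functors Omega_k -> Lambda, where Omega_k has objects N^k
 and a morphism (m,n) for each m <= n, with r(m,n)=m, s(m,n)=n, (m,n)(n,p)=(m,p), d(m,n)=n-m.
 A path x is stored as x m n = image of (m,n); it is undefined off the morphisms of Omega_k.\<close>

definition inf_paths ::
  "nat \<Rightarrow> 'a set \<Rightarrow> ('a \<Rightarrow> 'a) \<Rightarrow> ('a \<Rightarrow> 'a) \<Rightarrow> ('a \<Rightarrow> 'a \<Rightarrow> 'a) \<Rightarrow> ('a \<Rightarrow> nat \<Rightarrow> nat)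
     \<Rightarrow> ((nat \<Rightarrow> nat) \<Rightarrow> (nat \<Rightarrow> nat) \<Rightarrow> 'a) set" where
  "inf_paths k Mor r s cmp d =
    {x. (\<forall>m n. \<not> (m \<in> natk k \<and> n \<in> natk k \<and> m \<le> n) \<longrightarrow> x m n = undefined) \<and>
        (\<forall>m\<in>natk k. \<forall>n\<in>natk k. m \<le> n \<longrightarrow>
           x m n \<in> Mor \<and> d (x m n) = (\<lambda>i. n i - m i) \<and>
           r (x m n) = x m m \<and> s (x m n) = x n n) \<and>
        (\<forall>m\<in>natk k. x m m \<in> objs Mor r) \<and>
        (\<forall>m\<in>natk k. \<forall>n\<in>natk k. \<forall>p\<in>natk k. m \<le> n \<longrightarrow> n \<le> p \<longrightarrow>
           cmp (x m n) (x n p) = x m p)}"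

definition cyl ::
  "nat \<Rightarrow> 'a set \<Rightarrow> ('a \<Rightarrow> 'a) \<Rightarrow> ('a \<Rightarrow> 'a) \<Rightarrow> ('a \<Rightarrow> 'a \<Rightarrow> 'a) \<Rightarrow> ('a \<Rightarrow> nat \<Rightarrow> nat) \<Rightarrow> 'a
     \<Rightarrow> ((nat \<Rightarrow> nat) \<Rightarrow> (nat \<Rightarrow> nat) \<Rightarrow> 'a) set" where
  "cyl k Mor r s cmp d a = {x \<in> inf_paths k Mor r s cmp d. x zerok (d a) = a}"

definition path_topology ::
  "nat \<Rightarrow> 'a set \<Rightarrow> ('a \<Rightarrow> 'a) \<Rightarrow> ('a \<Rightarrow> 'a) \<Rightarrow> ('a \<Rightarrow> 'a \<Rightarrow> 'a) \<Rightarrow> ('a \<Rightarrow> nat \<Rightarrow> nat)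
     \<Rightarrow> ((nat \<Rightarrow> nat) \<Rightarrow> (nat \<Rightarrow> nat) \<Rightarrow> 'a) topology" where
  "path_topology k Mor r s cmp d = topology_generated_by (cyl k Mor r s cmp d ` Mor)"

definition borel_of :: "'b topology \<Rightarrow> 'b measure" where
  "borel_of T = sigma (topspace T) {U. openin T U}"

definition is_mu ::
  "nat \<Rightarrow> 'a set \<Rightarrow> ('a \<Rightarrow> 'a) \<Rightarrow> ('a \<Rightarrow> 'a) \<Rightarrow> ('a \<Rightarrow> 'a \<Rightarrow> 'a) \<Rightarrow> ('a \<Rightarrow> nat \<Rightarrow> nat)
     \<Rightarrow> ('a \<Rightarrow> real) \<Rightarrow> real \<Rightarrow> ('a \<Rightarrow> real) \<Rightarrow> ((nat \<Rightarrow> nat) \<Rightarrow> (nat \<Rightarrow> nat) \<Rightarrow> 'a) measure \<Rightarrow> bool" where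
  "is_mu k Mor r s cmp d y \<theta> \<xi> M \<longleftrightarrow>
     prob_space M \<and> sets M = sets (borel_of (path_topology k Mor r s cmp d)) \<and>
     space M = topspace (path_topology k Mor r s cmp d) \<and>
     (\<forall>a\<in>Mor. measure M (cyl k Mor r s cmp d a) =
        exp (- \<theta> * y a) / rhoB_pow k Mor r s d y \<theta> (d a) * \<xi> (s a))"

end

theory Submission
  imports Defs
begin

(*
  The Perron vector xi^{y,theta} is the unique normalised nonnegative common eigenvector of the
  matrices B_i(y,theta): by strong connectivity such an eigenvector is either zero or strictly
  positive, and two positive ones are compared through their smallest ratio.  As the entries of
  B_i(y,theta) depend continuously on theta and the normalised nonnegative vectors form a compact
  set, every limit point of xi^{y,theta_n} for theta_n -> theta is again such an eigenvector, hence
  equals xi^{y,theta}.  So xi, the spectral radii and the cylinder measures mu_{y,theta}(Z(lambda))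
  are continuous in theta.  On the other side, Lambda^infty is compact (a closed subset of a product
  of finite discrete spaces), so a continuous f varies by less than e on each cylinder of some fixed
  degree N, and its integral is within e of a finite sum of cylinder measures.
*)

lemma bounded_family_convergent_subseq:
  fixes X :: "nat \<Rightarrow> 'b \<Rightarrow> real"
  assumes "finite I" and "\<forall>n. \<forall>j\<in>I. \<bar>X n j\<bar> \<le> M"
  shows "\<exists>h L. strict_mono h \<and> (\<forall>j\<in>I. (\<lambda>n. X (h n) j) \<longlonglongrightarrow> L j)"
  using assms
proof (induction I rule: finite_induct)
  case empty
  show ?case by (rule exI[of _ id]) (simp add: strict_mono_def)
next
  case (insert j0 I)
  then obtain h L where h: "strict_mono h" and L: "\<forall>j\<in>I. (\<lambda>n. X (h n) j) \<longlonglongrightarrow> L j"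
    by auto
  obtain g where g: "strict_mono g" and mono: "monoseq (\<lambda>n. X (h (g n)) j0)"
    using seq_monosub[of "\<lambda>n. X (h n) j0"] by blast
  have "Bseq (\<lambda>n. X (h (g n)) j0)"
    using insert.prems by (intro BseqI'[where K = M]) auto
  then have "convergent (\<lambda>n. X (h (g n)) j0)"
    using mono by (rule Bseq_monoseq_convergent)
  then obtain l where l: "(\<lambda>n. X (h (g n)) j0) \<longlonglongrightarrow> l"
    unfolding convergent_def by blast
  have "\<forall>j\<in>insert j0 I. (\<lambda>n. X ((h \<circ> g) n) j) \<longlonglongrightarrow> (L(j0 := l)) j"
  proof
    fix j assume "j \<in> insert j0 I"
    show "(\<lambda>n. X ((h \<circ> g) n) j) \<longlonglongrightarrow> (L(j0 := l)) j"
    proof (cases "j = j0")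
      case False
      then have "(\<lambda>n. X (h n) j) \<longlonglongrightarrow> L j"
        using L \<open>j \<in> insert j0 I\<close> by simp
      from LIMSEQ_subseq_LIMSEQ[OF this g] show ?thesis
        using False by (simp add: o_def)
    qed (use l in simp)
  qed
  moreover have "strict_mono (h \<circ> g)"
    using h g by (simp add: strict_mono_def)
  ultimately show ?case by blast
qed

lemma tendsto_if_subseq_limits_unique:
  fixes X :: "nat \<Rightarrow> 'b \<Rightarrow> real"
  assumes "finite I" and bounded: "\<And>n j. j \<in> I \<Longrightarrow> \<bar>X n j\<bar> \<le> M"
    and unique: "\<And>h L. strict_mono h \<Longrightarrow> (\<And>j. j \<in> I \<Longrightarrow> (\<lambda>n. X (h n) j) \<longlonglongrightarrow> L j) \<Longrightarrow>
      L j = L\<^sub>0 j"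
    and "j \<in> I"
  shows "(\<lambda>n. X n j) \<longlonglongrightarrow> L\<^sub>0 j"
proof (rule ccontr)
  assume "\<not> ?thesis"
  then obtain e where "e > 0" and e: "\<forall>N. \<exists>n\<ge>N. \<not> dist (X n j) (L\<^sub>0 j) < e"
    unfolding LIMSEQ_def by blast
  then have "infinite {n. e \<le> dist (X n j) (L\<^sub>0 j)}"
    unfolding infinite_nat_iff_unbounded_le by (auto simp: not_less)
  from infinite_enumerate[OF this] obtain h :: "nat \<Rightarrow> nat"
    where h: "strict_mono h" and far: "\<And>n. e \<le> dist (X (h n) j) (L\<^sub>0 j)"
    by auto
  obtain g L where g: "strict_mono g" and L: "\<forall>j\<in>I. (\<lambda>n. X (h (g n)) j) \<longlonglongrightarrow> L j"
    using bounded_family_convergent_subseq[of I "\<lambda>n. X (h n)" M] assms(1) bounded by blast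
  have "strict_mono (h \<circ> g)"
    using h g by (simp add: strict_mono_def)
  then have "L j = L\<^sub>0 j"
    using unique[of "h \<circ> g" L] L by (simp add: o_def)
  then have "(\<lambda>n. dist (X (h (g n)) j) (L\<^sub>0 j)) \<longlonglongrightarrow> dist (L\<^sub>0 j) (L\<^sub>0 j)"
    using L \<open>j \<in> I\<close> by (intro tendsto_intros) auto
  then have "e \<le> 0"
    using far by (intro LIMSEQ_le_const) auto
  then show False using \<open>e > 0\<close> by simp
qed

lemma continuous_on_if_uniformly_approximable:
  fixes F :: "'a::topological_space \<Rightarrow> 'b::metric_space"
  assumes "\<And>e. e > 0 \<Longrightarrow> \<exists>G. continuous_on S G \<and> (\<forall>x\<in>S. dist (G x) (F x) \<le> e)"
  shows "continuous_on S F"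
proof -
  have "\<forall>n. \<exists>G. continuous_on S G \<and> (\<forall>x\<in>S. dist (G x) (F x) \<le> 1 / Suc n)"
    using assms by simp
  then obtain G where G: "\<And>n. continuous_on S (G n)"
    and close: "\<And>n x. x \<in> S \<Longrightarrow> dist (G n x) (F x) \<le> 1 / Suc n"
    by metis
  have "uniform_limit S G F sequentially"
    unfolding uniform_limit_sequentially_iff
  proof (intro allI impI)
    fix e :: real assume "e > 0"
    then obtain N where N: "1 / Suc N < e"
      using nat_approx_posE by blast
    have "dist (G n x) (F x) < e" if "n \<ge> N" "x \<in> S" for n x
    proof -
      have "1 / real (Suc n) \<le> 1 / Suc N"
        using that(1) by (simp add: frac_le)
      then show ?thesis using close[OF that(2), of n] N by linarith
    qed
    then show "\<exists>N. \<forall>n\<ge>N. \<forall>x\<in>S. dist (G n x) (F x) < e" by blast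
  qed
  then show ?thesis
    using G by (intro uniform_limit_theorem[of S G]) auto
qed

lemma min_ratio_witness:
  fixes p q :: "'b \<Rightarrow> real"
  assumes "finite S" "S \<noteq> {}" "\<And>v. v \<in> S \<Longrightarrow> 0 < p v"
  obtains c v\<^sub>0 where "v\<^sub>0 \<in> S" "c * p v\<^sub>0 = q v\<^sub>0" "\<And>v. v \<in> S \<Longrightarrow> c * p v \<le> q v"
proof -
  have "Min ((\<lambda>v. q v / p v) ` S) \<in> (\<lambda>v. q v / p v) ` S"
    using assms(1,2) by (intro Min_in) auto
  then obtain v\<^sub>0 where v\<^sub>0: "v\<^sub>0 \<in> S" "Min ((\<lambda>v. q v / p v) ` S) = q v\<^sub>0 / p v\<^sub>0"
    by auto
  have le: "q v\<^sub>0 / p v\<^sub>0 * p v \<le> q v" if "v \<in> S" for v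
    using Min_le[of "(\<lambda>v. q v / p v) ` S" "q v / p v"] assms(1,3) that v\<^sub>0(2)
    by (simp add: le_divide_eq)
  have "q v\<^sub>0 / p v\<^sub>0 * p v\<^sub>0 = q v\<^sub>0"
    using assms(3)[OF v\<^sub>0(1)] by simp
  from that[OF v\<^sub>0(1) this le] show ?thesis .
qed

lemma has_bochner_integral_step_function:
  fixes c :: "'i \<Rightarrow> real"
  assumes "finite_measure M" "\<And>i. i \<in> I \<Longrightarrow> A i \<in> sets M"
  shows "has_bochner_integral M (\<lambda>x. \<Sum>i\<in>I. c i * indicator (A i) x) (\<Sum>i\<in>I. c i * measure M (A i))"
  using assms
  by (intro has_bochner_integral_sum has_bochner_integral_mult_right has_bochner_integral_real_indicator)
    (auto simp: finite_measure.emeasure_finite less_top[symmetric])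

subsection \<open>Products of discrete spaces\<close>

definition discrete_product :: "('i \<Rightarrow> 'j \<Rightarrow> 'b set) \<Rightarrow> ('i \<Rightarrow> 'j \<Rightarrow> 'b) topology" where
  "discrete_product S =
     product_topology (\<lambda>m. product_topology (\<lambda>n. discrete_topology (S m n)) UNIV) UNIV"

lemma topspace_discrete_product: "topspace (discrete_product S) = {x. \<forall>m n. x m n \<in> S m n}"
  unfolding discrete_product_def by (auto simp: PiE_UNIV_domain Pi_def)

lemma compact_space_discrete_product:
  "(\<And>m n. finite (S m n)) \<Longrightarrow> compact_space (discrete_product S)"
  unfolding discrete_product_def compact_space_product_topology
  by (simp add: compact_space_discrete_topology)

lemma continuous_map_discrete_product_coordinate:
  "continuous_map (discrete_product S) (discrete_topology (S a b)) (\<lambda>x. x a b)"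
proof -
  have "continuous_map (discrete_product S)
      (product_topology (\<lambda>n. discrete_topology (S a n)) UNIV) (\<lambda>x. x a)"
    unfolding discrete_product_def by (rule continuous_map_product_projection) simp
  moreover have "continuous_map (product_topology (\<lambda>n. discrete_topology (S a n)) UNIV)
      (discrete_topology (S a b)) (\<lambda>g. g b)"
    by (rule continuous_map_product_projection) simp
  ultimately show ?thesis
    using continuous_map_compose[of _ _ "\<lambda>x. x a" _ "\<lambda>g. g b"] by (simp add: o_def)
qed

lemma openin_discrete_product_coordinate_eq:
  "openin (discrete_product S) {x \<in> topspace (discrete_product S). x a b = c}"
proof -
  have "{x \<in> topspace (discrete_product S). x a b \<in> {c} \<inter> S a b} =
      {x \<in> topspace (discrete_product S). x a b = c}"
    by (auto simp: topspace_discrete_product)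
  moreover have "openin (discrete_product S)
      {x \<in> topspace (discrete_product S). x a b \<in> {c} \<inter> S a b}"
    by (rule openin_continuous_map_preimage[OF continuous_map_discrete_product_coordinate]) simp
  ultimately show ?thesis by simp
qed

lemma closedin_discrete_product_coordinates:
  "closedin (discrete_product S)
     {x \<in> topspace (discrete_product S). Q (x a\<^sub>1 b\<^sub>1) (x a\<^sub>2 b\<^sub>2) (x a\<^sub>3 b\<^sub>3)}"
proof -
  let ?D = "discrete_topology (S a\<^sub>1 b\<^sub>1 \<times> S a\<^sub>2 b\<^sub>2 \<times> S a\<^sub>3 b\<^sub>3)"
  have "continuous_map (discrete_product S) ?D (\<lambda>x. (x a\<^sub>1 b\<^sub>1, x a\<^sub>2 b\<^sub>2, x a\<^sub>3 b\<^sub>3))"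
    unfolding prod_topology_discrete_topology
    by (intro continuous_map_pairedI continuous_map_discrete_product_coordinate)
  moreover have "closedin ?D {(u, v, w) \<in> S a\<^sub>1 b\<^sub>1 \<times> S a\<^sub>2 b\<^sub>2 \<times> S a\<^sub>3 b\<^sub>3. Q u v w}"
    by auto
  ultimately have "closedin (discrete_product S) {x \<in> topspace (discrete_product S).
      (x a\<^sub>1 b\<^sub>1, x a\<^sub>2 b\<^sub>2, x a\<^sub>3 b\<^sub>3) \<in> {(u, v, w) \<in> S a\<^sub>1 b\<^sub>1 \<times> S a\<^sub>2 b\<^sub>2 \<times> S a\<^sub>3 b\<^sub>3. Q u v w}}"
    by (rule closedin_continuous_map_preimage)
  moreover have "{x \<in> topspace (discrete_product S).
      (x a\<^sub>1 b\<^sub>1, x a\<^sub>2 b\<^sub>2, x a\<^sub>3 b\<^sub>3) \<in> {(u, v, w) \<in> S a\<^sub>1 b\<^sub>1 \<times> S a\<^sub>2 b\<^sub>2 \<times> S a\<^sub>3 b\<^sub>3. Q u v w}} =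
      {x \<in> topspace (discrete_product S). Q (x a\<^sub>1 b\<^sub>1) (x a\<^sub>2 b\<^sub>2) (x a\<^sub>3 b\<^sub>3)}"
    by (auto simp: topspace_discrete_product)
  ultimately show ?thesis by simp
qed

locale k_graph =
  fixes k :: nat and Mor :: "'a set" and r s :: "'a \<Rightarrow> 'a"
    and cmp :: "'a \<Rightarrow> 'a \<Rightarrow> 'a" and d :: "'a \<Rightarrow> nat \<Rightarrow> nat"
  assumes kgraph: "kgraph k Mor r s cmp d"
begin

abbreviation "V \<equiv> objs Mor r"
abbreviation "paths \<equiv> inf_paths k Mor r s cmp d"
abbreviation "T \<equiv> path_topology k Mor r s cmp d"
abbreviation "Z \<equiv> cyl k Mor r s cmp d"

lemma r_in_V: "a \<in> Mor \<Longrightarrow> r a \<in> V"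
  unfolding objs_def by simp

lemma s_in_V: "a \<in> Mor \<Longrightarrow> s a \<in> V"
  using kgraph unfolding kgraph_def objs_def by auto

lemma r_in_Mor: "a \<in> Mor \<Longrightarrow> r a \<in> Mor"
  using kgraph unfolding kgraph_def by auto

lemma V_subset_Mor: "v \<in> V \<Longrightarrow> v \<in> Mor"
  unfolding objs_def using r_in_Mor by auto

lemma r_vertex: "v \<in> V \<Longrightarrow> r v = v" and s_vertex: "v \<in> V \<Longrightarrow> s v = v"
  using kgraph unfolding kgraph_def by auto

lemma cmp_closed:
  assumes "a \<in> Mor" "b \<in> Mor" "s a = r b"
  shows "cmp a b \<in> Mor" "r (cmp a b) = r a" "s (cmp a b) = s b"
    "d (cmp a b) = (\<lambda>i. d a i + d b i)"
  using assms kgraph unfolding kgraph_def by auto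

lemma cmp_r_id: "a \<in> Mor \<Longrightarrow> cmp (r a) a = a"
  using kgraph unfolding kgraph_def by auto

lemma d_in_natk: "a \<in> Mor \<Longrightarrow> d a \<in> natk k"
  using kgraph unfolding kgraph_def by auto

lemma unique_factorization:
  assumes "a \<in> Mor" "m \<in> natk k" "n \<in> natk k" "d a = (\<lambda>i. m i + n i)"
  shows "\<exists>!p. fst p \<in> Mor \<and> snd p \<in> Mor \<and> s (fst p) = r (snd p) \<and>
    cmp (fst p) (snd p) = a \<and> d (fst p) = m \<and> d (snd p) = n"
  using kgraph assms unfolding kgraph_def by blast

lemma factorization_unique:
  assumes "b \<in> Mor" "c \<in> Mor" "s b = r c" "b' \<in> Mor" "c' \<in> Mor" "s b' = r c'"
    and "cmp b c = cmp b' c'" "d b = d b'" "d c = d c'"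
  shows "b = b'" "c = c'"
proof -
  have "cmp b c \<in> Mor" "d (cmp b c) = (\<lambda>i. d b i + d c i)"
    using cmp_closed(1,4)[OF assms(1-3)] by simp_all
  from unique_factorization[OF this(1) d_in_natk[OF assms(1)] d_in_natk[OF assms(2)] this(2)]
  have "(b, c) = (b', c')"
    using assms by (metis fst_conv snd_conv)
  then show "b = b'" "c = c'" by simp_all
qed

lemma factorizationE:
  assumes "a \<in> Mor" "m \<in> natk k" "n \<in> natk k" "d a = (\<lambda>i. m i + n i)"
  obtains b c where "b \<in> Mor" "c \<in> Mor" "s b = r c" "cmp b c = a" "d b = m" "d c = n"
  using unique_factorization[OF assms] by blast

lemma d_vertex:
  assumes "v \<in> V"
  shows "d v = (\<lambda>i. 0)"
proof
  fix i
  have "d v = d (cmp v v)"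
    using cmp_r_id[OF V_subset_Mor[OF assms]] r_vertex[OF assms] by simp
  also have "\<dots> = (\<lambda>i. d v i + d v i)"
    using cmp_closed(4)[OF V_subset_Mor[OF assms] V_subset_Mor[OF assms]]
      r_vertex[OF assms] s_vertex[OF assms] by simp
  finally have "d v = (\<lambda>i. d v i + d v i)" .
  from fun_cong[OF this, of i] show "d v i = 0" by simp
qed

lemma degree_zero_r_eq_s:
  assumes "a \<in> Mor" "d a = (\<lambda>i. 0)"
  shows "r a = s a"
proof -
  have ra: "r a \<in> Mor" "r (r a) = r a" "s (r a) = r a" "d (r a) = (\<lambda>i. 0)"
    using V_subset_Mor r_vertex s_vertex d_vertex r_in_V[OF assms(1)] by auto
  have sa: "s a \<in> Mor" "r (s a) = s a" "s (s a) = s a" "d (s a) = (\<lambda>i. 0)"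
    using V_subset_Mor r_vertex s_vertex d_vertex s_in_V[OF assms(1)] by auto
  have "cmp (r a) a = cmp a (s a)"
    using kgraph assms(1) unfolding kgraph_def by simp
  then have "r a = a" "a = s a"
    using factorization_unique[of "r a" a a "s a"] ra sa assms by simp_all
  then show ?thesis by simp
qed

lemma edge_factorE:
  assumes "a \<in> Mor" "i < k" "0 < d a i"
  obtains e c where "e \<in> Mor" "c \<in> Mor" "s e = r c" "cmp e c = a" "d e = unitv i"
    "(\<Sum>j<k. d c j) < (\<Sum>j<k. d a j)"
proof -
  define n where "n = (\<lambda>j. d a j - unitv i j)"
  have "unitv i \<in> natk k" "n \<in> natk k"
    using assms(2) d_in_natk[OF assms(1)] unfolding n_def natk_def unitv_def by auto
  moreover have da: "d a = (\<lambda>j. unitv i j + n j)"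
    using assms(3) unfolding n_def unitv_def by auto
  ultimately obtain e c where ec: "e \<in> Mor" "c \<in> Mor" "s e = r c" "cmp e c = a"
    "d e = unitv i" "d c = n"
    using factorizationE[OF assms(1)] by blast
  have "(\<Sum>j<k. d a j) = (\<Sum>j<k. unitv i j) + (\<Sum>j<k. d c j)"
    using da ec(6) by (simp add: sum.distrib)
  moreover have "(\<Sum>j<k. unitv i j) = 1"
    using assms(2) unfolding unitv_def by simp
  ultimately show ?thesis
    using that[OF ec(1-5)] ec(6) by simp
qed

subsection \<open>Infinite paths and cylinders\<close>

lemma zerok_natk: "zerok \<in> natk k" and zerok_le: "zerok \<le> n"
  by (simp_all add: natk_def zerok_def le_fun_def)

lemma path_segment:
  assumes "x \<in> paths" "m \<in> natk k" "n \<in> natk k" "m \<le> n"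
  shows "x m n \<in> Mor" "d (x m n) = (\<lambda>i. n i - m i)" "r (x m n) = x m m" "s (x m n) = x n n"
  using assms unfolding inf_paths_def by auto

lemma path_compose:
  assumes "x \<in> paths" "m \<in> natk k" "n \<in> natk k" "p \<in> natk k" "m \<le> n" "n \<le> p"
  shows "cmp (x m n) (x n p) = x m p"
  using assms unfolding inf_paths_def by blast

lemma path_initial_segment:
  assumes "x \<in> paths" "n \<in> natk k"
  shows "x zerok n \<in> Mor" "d (x zerok n) = n"
  using path_segment(1,2)[OF assms(1) zerok_natk assms(2) zerok_le] by (simp_all add: zerok_def)

lemma mem_cyl_initial_segment:
  assumes "x \<in> paths" "n \<in> natk k"
  shows "z \<in> Z (x zerok n) \<longleftrightarrow> z \<in> paths \<and> z zerok n = x zerok n"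
  using path_initial_segment(2)[OF assms] unfolding cyl_def by auto

lemma cyl_initial_segment_antimono:
  assumes "x \<in> paths" "m \<in> natk k" "n \<in> natk k" "m \<le> n"
  shows "Z (x zerok n) \<subseteq> Z (x zerok m)"
proof
  fix z assume z: "z \<in> Z (x zerok n)"
  then have zx: "z \<in> paths" "z zerok n = x zerok n"
    using mem_cyl_initial_segment assms(1,3) by auto
  have "z zerok m = x zerok m"
  proof (rule factorization_unique(1))
    show "cmp (z zerok m) (z m n) = cmp (x zerok m) (x m n)"
      using path_compose[OF _ zerok_natk assms(2,3) zerok_le assms(4)] zx assms(1) by simp
  qed (use path_segment[OF zx(1)] path_segment[OF assms(1)] zerok_natk zerok_le assms(2-4) zx(2)
      in auto)
  then show "z \<in> Z (x zerok m)"
    using mem_cyl_initial_segment assms(1,2) zx(1) by auto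
qed

lemma topspace_path_topology: "topspace T = paths"
proof -
  have "x \<in> \<Union> (Z ` Mor)" if "x \<in> paths" for x
    using path_initial_segment[OF that zerok_natk] mem_cyl_initial_segment[OF that zerok_natk]
      that by blast
  then have "\<Union> (Z ` Mor) = paths"
    unfolding cyl_def by blast
  then show ?thesis
    unfolding path_topology_def by simp
qed

lemma openin_cyl: "a \<in> Mor \<Longrightarrow> openin T (Z a)"
  unfolding path_topology_def openin_topology_generated_by_iff
  by (rule generate_topology_on.Basis) blast

lemma openin_path_topologyE:
  assumes "openin T U" "x \<in> U"
  obtains n where "n \<in> natk k" "Z (x zerok n) \<subseteq> U"
proof -
  have "generate_topology_on (Z ` Mor) U"
    using assms(1) unfolding path_topology_def openin_topology_generated_by_iff .
  then have "\<forall>x\<in>U. x \<in> paths \<longrightarrow> (\<exists>n\<in>natk k. Z (x zerok n) \<subseteq> U)"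
  proof (induction rule: generate_topology_on.induct)
    case (Int U\<^sub>1 U\<^sub>2)
    show ?case
    proof (intro ballI impI)
      fix x assume x: "x \<in> U\<^sub>1 \<inter> U\<^sub>2" "x \<in> paths"
      then obtain n\<^sub>1 n\<^sub>2 where n: "n\<^sub>1 \<in> natk k" "Z (x zerok n\<^sub>1) \<subseteq> U\<^sub>1"
        "n\<^sub>2 \<in> natk k" "Z (x zerok n\<^sub>2) \<subseteq> U\<^sub>2"
        using Int.IH by blast
      define n where "n = (\<lambda>i. n\<^sub>1 i + n\<^sub>2 i)"
      have "n \<in> natk k" "n\<^sub>1 \<le> n" "n\<^sub>2 \<le> n"
        using n unfolding n_def natk_def le_fun_def by auto
      then show "\<exists>n\<in>natk k. Z (x zerok n) \<subseteq> U\<^sub>1 \<inter> U\<^sub>2"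
        using cyl_initial_segment_antimono[OF x(2)] n by blast
    qed
  next
    case (Basis U)
    then obtain a where a: "a \<in> Mor" "U = Z a" by blast
    have "x zerok (d a) = a" if "x \<in> U" for x
      using that a unfolding cyl_def by simp
    then show ?case
      using a(2) d_in_natk[OF a(1)] by (metis order_refl)
  qed blast+
  then show ?thesis
    using that assms openin_subset[OF assms(1)] topspace_path_topology by blast
qed

end

locale finite_k_graph = k_graph +
  assumes finite: "finite_kgraph k Mor d"
begin

lemma finite_degree: "n \<in> natk k \<Longrightarrow> finite {a \<in> Mor. d a = n}"
  using finite unfolding finite_kgraph_def by blast

lemma finite_V: "finite V"
proof (rule finite_subset)
  show "V \<subseteq> {a \<in> Mor. d a = (\<lambda>i. 0)}"
    using V_subset_Mor d_vertex by blast
  show "finite {a \<in> Mor. d a = (\<lambda>i. 0)}"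
    by (rule finite_degree) (simp add: natk_def)
qed

subsection \<open>Compactness of the infinite path space\<close>

text \<open>The singleton \<open>{undefined}\<close> is there because off the morphisms of \<open>\<Omega>\<^sub>k\<close> a path
  takes the junk value \<open>undefined\<close>.\<close>

definition segments :: "(nat \<Rightarrow> nat) \<Rightarrow> (nat \<Rightarrow> nat) \<Rightarrow> 'a set" where
  "segments m n =
     (if m \<in> natk k \<and> n \<in> natk k \<and> m \<le> n then {a \<in> Mor. d a = (\<lambda>i. n i - m i)} else {undefined})"

lemma finite_segments: "finite (segments m n)"
proof (cases "m \<in> natk k \<and> n \<in> natk k \<and> m \<le> n")
  case True
  then have "(\<lambda>i. n i - m i) \<in> natk k"
    unfolding natk_def by auto
  from finite_degree[OF this] show ?thesis
    using True unfolding segments_def by simp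
next
  case False
  then have "segments m n = {undefined}"
    unfolding segments_def by (rule if_not_P)
  then show ?thesis by simp
qed

lemma paths_eq_constraints:
  "paths = {x \<in> topspace (discrete_product segments).
     \<forall>m n p. (m \<in> natk k \<and> n \<in> natk k \<and> m \<le> n \<longrightarrow> r (x m n) = x m m \<and> s (x m n) = x n n) \<and>
       (m \<in> natk k \<longrightarrow> x m m \<in> V) \<and>
       (m \<in> natk k \<and> n \<in> natk k \<and> p \<in> natk k \<and> m \<le> n \<and> n \<le> p \<longrightarrow> cmp (x m n) (x n p) = x m p)}"
  unfolding inf_paths_def topspace_discrete_product segments_def
  by (auto split: if_splits)

lemma closedin_paths: "closedin (discrete_product segments) paths"
proof -
  let ?X = "discrete_product segments"
  define R where "R m n = {x \<in> topspace ?X.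
    m \<in> natk k \<and> n \<in> natk k \<and> m \<le> n \<longrightarrow> r (x m n) = x m m \<and> s (x m n) = x n n}" for m n
  define W where "W m = {x \<in> topspace ?X. m \<in> natk k \<longrightarrow> x m m \<in> V}" for m
  define C where "C m n p = {x \<in> topspace ?X.
    m \<in> natk k \<and> n \<in> natk k \<and> p \<in> natk k \<and> m \<le> n \<and> n \<le> p \<longrightarrow> cmp (x m n) (x n p) = x m p}"
    for m n p
  have "closedin ?X (R m n)" for m n
    using closedin_discrete_product_coordinates[of segments
        "\<lambda>u v w. m \<in> natk k \<and> n \<in> natk k \<and> m \<le> n \<longrightarrow> r u = v \<and> s u = w" m n m m n n]
    unfolding R_def by simp
  moreover have "closedin ?X (W m)" for m
    using closedin_discrete_product_coordinates[of segments "\<lambda>u v w. m \<in> natk k \<longrightarrow> u \<in> V"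
        m m m m m m]
    unfolding W_def by simp
  moreover have "closedin ?X (C m n p)" for m n p
    using closedin_discrete_product_coordinates[of segments
        "\<lambda>u v w. m \<in> natk k \<and> n \<in> natk k \<and> p \<in> natk k \<and> m \<le> n \<and> n \<le> p \<longrightarrow> cmp u v = w"
        m n n p m p]
    unfolding C_def by simp
  ultimately have "closedin ?X (topspace ?X \<inter> (\<Inter>m. \<Inter>n. \<Inter>p. R m n \<inter> W m \<inter> C m n p))"
    by (intro closedin_Int closedin_INT closedin_topspace) auto
  moreover have "paths = topspace ?X \<inter> (\<Inter>m. \<Inter>n. \<Inter>p. R m n \<inter> W m \<inter> C m n p)"
    unfolding paths_eq_constraints R_def W_def C_def by auto
  ultimately show ?thesis by simp
qed

lemma compactin_paths: "compactin (discrete_product segments) paths"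
  using closedin_compact_space[OF compact_space_discrete_product[OF finite_segments] closedin_paths] .

text \<open>This is where compactness enters: finitely many of the cylinders
  \<open>Z (x zerok (depth x))\<close> cover the path space, and one degree \<open>N\<close> refines all of them.\<close>

lemma uniform_cyl_depth:
  assumes depth: "\<And>x. x \<in> paths \<Longrightarrow> depth x \<in> natk k"
  obtains N where "N \<in> natk k"
    "\<And>x. x \<in> paths \<Longrightarrow> \<exists>x\<^sub>0\<in>paths. depth x\<^sub>0 \<le> N \<and> x \<in> Z (x\<^sub>0 zerok (depth x\<^sub>0))"
proof -
  let ?X = "discrete_product segments"
  define Cov where "Cov x\<^sub>0 = {x \<in> topspace ?X. x zerok (depth x\<^sub>0) = x\<^sub>0 zerok (depth x\<^sub>0)}" for x\<^sub>0
  have "\<exists>\<F>. finite \<F> \<and> \<F> \<subseteq> Cov ` paths \<and> paths \<subseteq> \<Union>\<F>"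
  proof (rule compactinD[OF compactin_paths])
    show "openin ?X U" if "U \<in> Cov ` paths" for U
      using that unfolding Cov_def by (auto intro!: openin_discrete_product_coordinate_eq)
    show "paths \<subseteq> \<Union> (Cov ` paths)"
      using compactin_subset_topspace[OF compactin_paths] unfolding Cov_def by blast
  qed
  then obtain X\<^sub>0 where X\<^sub>0: "X\<^sub>0 \<subseteq> paths" "finite X\<^sub>0" "paths \<subseteq> \<Union> (Cov ` X\<^sub>0)"
    by (metis finite_subset_image)
  define N where "N = (\<lambda>i. \<Sum>x\<^sub>0\<in>X\<^sub>0. depth x\<^sub>0 i)"
  have "N \<in> natk k"
    using depth X\<^sub>0(1) unfolding N_def natk_def by (auto intro: sum.neutral)
  moreover have "depth x\<^sub>0 \<le> N" if "x\<^sub>0 \<in> X\<^sub>0" for x\<^sub>0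
    unfolding le_fun_def N_def using X\<^sub>0(2) that by (auto intro: member_le_sum)
  moreover have "x \<in> Z (x\<^sub>0 zerok (depth x\<^sub>0))" if "x \<in> paths" "x \<in> Cov x\<^sub>0" "x\<^sub>0 \<in> paths" for x x\<^sub>0
    using that mem_cyl_initial_segment[OF that(3) depth[OF that(3)]] unfolding Cov_def by blast
  ultimately show ?thesis
    using that X\<^sub>0 by blast
qed

lemma continuous_map_uniformly_on_cyls:
  assumes f: "continuous_map T euclideanreal f" and "e > 0"
  obtains N where "N \<in> natk k" "\<And>x z. x \<in> paths \<Longrightarrow> z \<in> Z (x zerok N) \<Longrightarrow> \<bar>f z - f x\<bar> < e"
proof -
  have "\<forall>x\<in>paths. \<exists>n. n \<in> natk k \<and> Z (x zerok n) \<subseteq> {z \<in> topspace T. f z \<in> ball (f x) (e/2)}"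
  proof
    fix x assume "x \<in> paths"
    have "openin T {z \<in> topspace T. f z \<in> ball (f x) (e/2)}"
      by (rule openin_continuous_map_preimage[OF f]) simp
    moreover have "x \<in> {z \<in> topspace T. f z \<in> ball (f x) (e/2)}"
      using \<open>x \<in> paths\<close> \<open>e > 0\<close> topspace_path_topology by simp
    ultimately obtain n where "n \<in> natk k"
      "Z (x zerok n) \<subseteq> {z \<in> topspace T. f z \<in> ball (f x) (e/2)}"
      by (rule openin_path_topologyE)
    then show "\<exists>n. n \<in> natk k \<and> Z (x zerok n) \<subseteq> {z \<in> topspace T. f z \<in> ball (f x) (e/2)}"
      by blast
  qed
  from bchoice[OF this] obtain depth where
    "\<forall>x\<in>paths. depth x \<in> natk k \<and>
      Z (x zerok (depth x)) \<subseteq> {z \<in> topspace T. f z \<in> ball (f x) (e/2)}"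
    by blast
  then have depth: "\<And>x. x \<in> paths \<Longrightarrow> depth x \<in> natk k"
    and near: "\<And>x. x \<in> paths \<Longrightarrow> Z (x zerok (depth x)) \<subseteq> {z \<in> topspace T. f z \<in> ball (f x) (e/2)}"
    by blast+
  obtain N where N: "N \<in> natk k"
    and cover: "\<And>x. x \<in> paths \<Longrightarrow> \<exists>x\<^sub>0\<in>paths. depth x\<^sub>0 \<le> N \<and> x \<in> Z (x\<^sub>0 zerok (depth x\<^sub>0))"
    using uniform_cyl_depth[of depth, OF depth] by blast
  have "\<bar>f z - f x\<bar> < e" if x: "x \<in> paths" and z: "z \<in> Z (x zerok N)" for x z
  proof -
    obtain x\<^sub>0 where x\<^sub>0: "x\<^sub>0 \<in> paths" "depth x\<^sub>0 \<le> N" "x \<in> Z (x\<^sub>0 zerok (depth x\<^sub>0))"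
      using cover[OF x] by blast
    have "Z (x zerok (depth x\<^sub>0)) = Z (x\<^sub>0 zerok (depth x\<^sub>0))"
      using x\<^sub>0(3) mem_cyl_initial_segment[OF x\<^sub>0(1) depth[OF x\<^sub>0(1)]] by simp
    moreover have "z \<in> Z (x zerok (depth x\<^sub>0))"
      using cyl_initial_segment_antimono[OF x depth[OF x\<^sub>0(1)] N x\<^sub>0(2)] z by blast
    ultimately have "f z \<in> ball (f x\<^sub>0) (e/2)" "f x \<in> ball (f x\<^sub>0) (e/2)"
      using near[OF x\<^sub>0(1)] x\<^sub>0(3) by blast+
    then show ?thesis
      unfolding mem_ball dist_real_def by linarith
  qed
  then show ?thesis
    using that N by blast
qed

definition cyl_point :: "'a \<Rightarrow> (nat \<Rightarrow> nat) \<Rightarrow> (nat \<Rightarrow> nat) \<Rightarrow> 'a" where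
  "cyl_point a = (SOME x. x \<in> Z a)"

lemma cyl_point_in_cyl:
  assumes "x \<in> paths" "n \<in> natk k"
  shows "cyl_point (x zerok n) \<in> Z (x zerok n)"
  unfolding cyl_point_def
  by (rule someI[of _ x]) (simp add: mem_cyl_initial_segment[OF assms] assms(1))

lemma sum_indicator_cyls:
  assumes "x \<in> paths" "N \<in> natk k"
  shows "(\<Sum>a\<in>{a \<in> Mor. d a = N}. c a * indicator (Z a) x) = (c (x zerok N) :: real)"
proof -
  have "c a * indicator (Z a) x = (if a = x zerok N then c a else 0)"
    if "a \<in> {a \<in> Mor. d a = N}" for a
    using that assms(1) unfolding cyl_def indicator_def by auto
  then have "(\<Sum>a\<in>{a \<in> Mor. d a = N}. c a * indicator (Z a) x) =
      (\<Sum>a\<in>{a \<in> Mor. d a = N}. if a = x zerok N then c a else 0)"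
    by (rule sum.cong[OF refl])
  also have "\<dots> = c (x zerok N)"
    using finite_degree[OF assms(2)] path_initial_segment[OF assms] by simp
  finally show ?thesis .
qed

lemma integral_approx_by_cyls:
  assumes M: "prob_space M" "space M = paths" "\<And>a. a \<in> Mor \<Longrightarrow> Z a \<in> sets M"
    and f: "f \<in> borel_measurable M" and N: "N \<in> natk k"
    and osc: "\<And>x z. x \<in> paths \<Longrightarrow> z \<in> Z (x zerok N) \<Longrightarrow> \<bar>f z - f x\<bar> < e"
  shows "\<bar>integral\<^sup>L M f - (\<Sum>a\<in>{a \<in> Mor. d a = N}. f (cyl_point a) * measure M (Z a))\<bar> \<le> e"
proof -
  interpret prob_space M by (rule M(1))
  define L where "L = {a \<in> Mor. d a = N}"
  define g where "g x = (\<Sum>a\<in>L. f (cyl_point a) * indicator (Z a) x)" for x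
  have g: "g x = f (cyl_point (x zerok N))" if "x \<in> paths" for x
    unfolding g_def L_def by (rule sum_indicator_cyls[OF that N])
  have close: "\<bar>f x - g x\<bar> < e" if "x \<in> paths" for x
    using osc[OF that cyl_point_in_cyl[OF that N]] g[OF that] by simp
  have "has_bochner_integral M g (\<Sum>a\<in>L. f (cyl_point a) * measure M (Z a))"
    unfolding g_def L_def using M(3) finite_measure_axioms
    by (intro has_bochner_integral_step_function) auto
  then have gi: "integrable M g"
    and gint: "integral\<^sup>L M g = (\<Sum>a\<in>L. f (cyl_point a) * measure M (Z a))"
    by (simp_all add: has_bochner_integral_iff)
  have fi: "integrable M f"
  proof (rule integrable_const_bound[where B = "e + (\<Sum>a\<in>L. \<bar>f (cyl_point a)\<bar>)"])
    show "AE x in M. norm (f x) \<le> e + (\<Sum>a\<in>L. \<bar>f (cyl_point a)\<bar>)"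
    proof (rule AE_I2)
      fix x assume "x \<in> space M"
      then have x: "x \<in> paths" using M(2) by simp
      have "\<bar>g x\<bar> \<le> (\<Sum>a\<in>L. \<bar>f (cyl_point a)\<bar>)"
        unfolding g[OF x] L_def using finite_degree[OF N] path_initial_segment[OF x N]
        by (intro member_le_sum) auto
      then show "norm (f x) \<le> e + (\<Sum>a\<in>L. \<bar>f (cyl_point a)\<bar>)"
        using close[OF x] by simp
    qed
  qed (rule f)
  have "\<bar>integral\<^sup>L M f - integral\<^sup>L M g\<bar> = \<bar>integral\<^sup>L M (\<lambda>x. f x - g x)\<bar>"
    using fi gi by simp
  also have "\<dots> \<le> integral\<^sup>L M (\<lambda>x. \<bar>f x - g x\<bar>)"
    using integral_norm_bound[of M "\<lambda>x. f x - g x"] by simp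
  also have "\<dots> \<le> integral\<^sup>L M (\<lambda>x. e)"
    using fi gi close M(2) by (intro integral_mono) (auto intro: less_imp_le)
  also have "\<dots> = e"
    by (simp add: prob_space)
  finally show ?thesis
    using gint unfolding L_def by simp
qed

subsection \<open>Nonnegative common eigenvectors\<close>

definition edge_positive :: "(nat \<Rightarrow> 'a \<Rightarrow> 'a \<Rightarrow> real) \<Rightarrow> bool" where
  "edge_positive A \<longleftrightarrow>
     (\<forall>i v w. 0 \<le> A i v w) \<and> (\<forall>e\<in>Mor. \<forall>i<k. d e = unitv i \<longrightarrow> 0 < A i (r e) (s e))"

definition nonneg_eigvec :: "(nat \<Rightarrow> 'a \<Rightarrow> 'a \<Rightarrow> real) \<Rightarrow> ('a \<Rightarrow> real) \<Rightarrow> (nat \<Rightarrow> real) \<Rightarrow> bool" where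
  "nonneg_eigvec A z \<sigma> \<longleftrightarrow>
     (\<forall>v\<in>V. 0 \<le> z v) \<and> (\<forall>i<k. \<forall>v\<in>V. (\<Sum>w\<in>V. A i v w * z w) = \<sigma> i * z v)"

lemma edge_positive_Bmat: "edge_positive (Bmat Mor r s d y \<theta>)"
  unfolding edge_positive_def
proof (intro conjI allI ballI impI)
  fix i v w
  show "0 \<le> Bmat Mor r s d y \<theta> i v w"
    unfolding Bmat_def by (intro sum_nonneg) simp
next
  fix e i assume e: "e \<in> Mor" "i < k" "d e = unitv i"
  let ?E = "{a \<in> Mor. d a = unitv i \<and> r a = r e \<and> s a = s e}"
  have "unitv i \<in> natk k"
    using e(2) by (simp add: natk_def unitv_def)
  from finite_degree[OF this] have "finite ?E"
    by (rule finite_subset[rotated]) auto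
  then have "exp (- \<theta> * y e) \<le> (\<Sum>a\<in>?E. exp (- \<theta> * y a))"
    using e by (intro member_le_sum) auto
  then show "0 < Bmat Mor r s d y \<theta> i (r e) (s e)"
    unfolding Bmat_def using exp_gt_zero[of "- \<theta> * y e"] by linarith
qed

lemma eigenvalue_mult_range_pos:
  assumes A: "edge_positive A" and z: "nonneg_eigvec A z \<sigma>"
    and e: "e \<in> Mor" "i < k" "d e = unitv i" and pos: "0 < z (s e)"
  shows "0 < \<sigma> i * z (r e)"
proof -
  have "0 < A i (r e) (s e) * z (s e)"
    using A e pos unfolding edge_positive_def by simp
  also have "\<dots> \<le> (\<Sum>w\<in>V. A i (r e) w * z w)"
    using finite_V s_in_V[OF e(1)] A z unfolding edge_positive_def nonneg_eigvec_def
    by (intro member_le_sum) auto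
  also have "\<dots> = \<sigma> i * z (r e)"
    using z e(2) r_in_V[OF e(1)] unfolding nonneg_eigvec_def by simp
  finally show ?thesis .
qed

lemma nonneg_eigvec_pos_edge:
  assumes A: "edge_positive A" and z: "nonneg_eigvec A z \<sigma>"
    and e: "e \<in> Mor" "i < k" "d e = unitv i" and pos: "0 < z (s e)"
  shows "0 < z (r e)"
  using eigenvalue_mult_range_pos[OF assms] z r_in_V[OF e(1)]
  unfolding nonneg_eigvec_def by (auto simp: zero_less_mult_iff)

lemma nonneg_eigvec_pos_morphism:
  assumes A: "edge_positive A" and z: "nonneg_eigvec A z \<sigma>"
    and "a \<in> Mor" "0 < z (s a)"
  shows "0 < z (r a)"
  using assms(3,4)
proof (induction a rule: measure_induct_rule[where f = "\<lambda>a. \<Sum>i<k. d a i"])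
  case (less a)
  show ?case
  proof (cases "\<exists>i<k. 0 < d a i")
    case True
    then obtain i where i: "i < k" "0 < d a i" by blast
    obtain e c where ec: "e \<in> Mor" "c \<in> Mor" "s e = r c" "cmp e c = a" "d e = unitv i"
      and smaller: "(\<Sum>j<k. d c j) < (\<Sum>j<k. d a j)"
      using edge_factorE[OF less.prems(1) i] by blast
    have "0 < z (r c)"
      using less.IH[OF smaller ec(2)] less.prems(2) cmp_closed(3)[OF ec(1-3)] ec(4) by simp
    then have "0 < z (r e)"
      using nonneg_eigvec_pos_edge[OF A z ec(1) i(1) ec(5)] ec(3) by simp
    then show ?thesis
      using cmp_closed(2)[OF ec(1-3)] ec(4) by simp
  next
    case False
    have "d a = (\<lambda>i. 0)"
    proof
      fix i show "d a i = 0"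
        using False d_in_natk[OF less.prems(1)] unfolding natk_def by (cases "i < k") auto
    qed
    then show ?thesis
      using degree_zero_r_eq_s[OF less.prems(1)] less.prems(2) by simp
  qed
qed

lemma eigenvalue_eq_sum:
  assumes "nonneg_eigvec A z \<sigma>" "(\<Sum>v\<in>V. z v) = 1" "i < k"
  shows "\<sigma> i = (\<Sum>v\<in>V. \<Sum>w\<in>V. A i v w * z w)"
proof -
  have "\<sigma> i = (\<Sum>v\<in>V. \<sigma> i * z v)"
    using assms(2) by (simp add: sum_distrib_left[symmetric])
  also have "\<dots> = (\<Sum>v\<in>V. \<Sum>w\<in>V. A i v w * z w)"
    using assms(1,3) unfolding nonneg_eigvec_def by simp
  finally show ?thesis .
qed

lemma normalized_nonneg_eigvec_limit:
  assumes z: "\<And>n. nonneg_eigvec (A n) (z n) (\<sigma> n)" "\<And>n. (\<Sum>v\<in>V. z n v) = 1"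
    and A_lim: "\<And>i v w. (\<lambda>n. A n i v w) \<longlonglongrightarrow> A' i v w"
    and z_lim: "\<And>w. w \<in> V \<Longrightarrow> (\<lambda>n. z n w) \<longlonglongrightarrow> z' w"
  shows "nonneg_eigvec A' z' (\<lambda>i. \<Sum>v\<in>V. \<Sum>w\<in>V. A' i v w * z' w)" "(\<Sum>v\<in>V. z' v) = 1"
proof -
  have "(\<lambda>n. \<Sum>v\<in>V. z n v) \<longlonglongrightarrow> (\<Sum>v\<in>V. z' v)"
    using z_lim by (intro tendsto_sum)
  then show "(\<Sum>v\<in>V. z' v) = 1"
    using z(2) LIMSEQ_unique[OF _ tendsto_const] by simp
  have "0 \<le> z' w" if "w \<in> V" for w
    using z(1) that by (intro LIMSEQ_le_const[OF z_lim[OF that]]) (auto simp: nonneg_eigvec_def)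
  moreover have "(\<Sum>w\<in>V. A' i v w * z' w) = (\<Sum>v\<in>V. \<Sum>w\<in>V. A' i v w * z' w) * z' v"
    if "i < k" "v \<in> V" for i v
  proof (rule LIMSEQ_unique)
    show "(\<lambda>n. \<Sum>w\<in>V. A n i v w * z n w) \<longlonglongrightarrow> (\<Sum>w\<in>V. A' i v w * z' w)"
      using A_lim z_lim by (intro tendsto_intros) auto
    have "(\<lambda>n. (\<Sum>v\<in>V. \<Sum>w\<in>V. A n i v w * z n w) * z n v) \<longlonglongrightarrow>
        (\<Sum>v\<in>V. \<Sum>w\<in>V. A' i v w * z' w) * z' v"
      using A_lim z_lim that(2) by (intro tendsto_intros) auto
    moreover have "(\<Sum>w\<in>V. A n i v w * z n w) = (\<Sum>v\<in>V. \<Sum>w\<in>V. A n i v w * z n w) * z n v" for n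
      using z(1)[of n] eigenvalue_eq_sum[OF z(1,2) that(1)] that unfolding nonneg_eigvec_def by simp
    ultimately show "(\<lambda>n. \<Sum>w\<in>V. A n i v w * z n w) \<longlonglongrightarrow>
        (\<Sum>v\<in>V. \<Sum>w\<in>V. A' i v w * z' w) * z' v"
      by simp
  qed
  ultimately show "nonneg_eigvec A' z' (\<lambda>i. \<Sum>v\<in>V. \<Sum>w\<in>V. A' i v w * z' w)"
    unfolding nonneg_eigvec_def by simp
qed

end

locale strongly_connected_k_graph = finite_k_graph +
  assumes strongly_connected: "strongly_connected Mor r s"
begin

lemma connecting_morphismE:
  assumes "v \<in> V" "w \<in> V"
  obtains a where "a \<in> Mor" "r a = v" "s a = w"
proof -
  have "\<forall>v\<in>V. \<forall>w\<in>V. \<exists>a\<in>Mor. r a = v \<and> s a = w"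
    using strongly_connected unfolding strongly_connected_def .
  then have "\<exists>a\<in>Mor. r a = v \<and> s a = w"
    using assms by simp
  then show ?thesis
    using that by blast
qed

lemma nonneg_eigvec_zero_or_pos:
  assumes "edge_positive A" "nonneg_eigvec A z \<sigma>"
  shows "(\<forall>v\<in>V. z v = 0) \<or> (\<forall>v\<in>V. 0 < z v)"
proof (rule disjCI)
  assume "\<not> (\<forall>v\<in>V. 0 < z v)"
  show "\<forall>v\<in>V. z v = 0"
  proof (rule ccontr)
    assume "\<not> (\<forall>v\<in>V. z v = 0)"
    then obtain w where "w \<in> V" "z w \<noteq> 0"
      by blast
    moreover have "0 \<le> z w"
      using assms(2) \<open>w \<in> V\<close> unfolding nonneg_eigvec_def by blast
    ultimately have w: "w \<in> V" "0 < z w"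
      by simp_all
    have "0 < z v" if v: "v \<in> V" for v
    proof -
      obtain a where a: "a \<in> Mor" "r a = v" "s a = w"
        using connecting_morphismE[OF v w(1)] .
      show ?thesis
        using nonneg_eigvec_pos_morphism[OF assms a(1)] w(2) a(2,3) by simp
    qed
    then show False
      using \<open>\<not> (\<forall>v\<in>V. 0 < z v)\<close> by blast
  qed
qed

lemma normalized_nonneg_eigvec_pos:
  assumes "edge_positive A" "nonneg_eigvec A z \<sigma>" "(\<Sum>v\<in>V. z v) = 1" "v \<in> V"
  shows "0 < z v"
proof -
  have "\<not> (\<forall>v\<in>V. z v = 0)"
  proof
    assume "\<forall>v\<in>V. z v = 0"
    then have "(\<Sum>v\<in>V. z v) = 0" by simp
    then show False using assms(3) by simp
  qed
  then show ?thesis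
    using nonneg_eigvec_zero_or_pos[OF assms(1,2)] assms(4) by blast
qed

lemma normalized_nonneg_eigvec_eigenvalue_le:
  assumes A: "edge_positive A"
    and z\<^sub>1: "nonneg_eigvec A z\<^sub>1 \<sigma>\<^sub>1" "(\<Sum>v\<in>V. z\<^sub>1 v) = 1"
    and z\<^sub>2: "nonneg_eigvec A z\<^sub>2 \<sigma>\<^sub>2" "(\<Sum>v\<in>V. z\<^sub>2 v) = 1"
    and i: "i < k"
  shows "\<sigma>\<^sub>1 i \<le> \<sigma>\<^sub>2 i"
proof -
  have "V \<noteq> {}"
    using z\<^sub>1(2) by auto
  moreover have "\<And>v. v \<in> V \<Longrightarrow> 0 < z\<^sub>1 v"
    by (rule normalized_nonneg_eigvec_pos[OF A z\<^sub>1])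
  ultimately obtain c v\<^sub>0 where v\<^sub>0: "v\<^sub>0 \<in> V" "c * z\<^sub>1 v\<^sub>0 = z\<^sub>2 v\<^sub>0"
    and le: "\<And>v. v \<in> V \<Longrightarrow> c * z\<^sub>1 v \<le> z\<^sub>2 v"
    using min_ratio_witness[of V z\<^sub>1 z\<^sub>2, OF finite_V] by metis
  have "\<sigma>\<^sub>1 i * z\<^sub>2 v\<^sub>0 = c * (\<sigma>\<^sub>1 i * z\<^sub>1 v\<^sub>0)"
    unfolding v\<^sub>0(2)[symmetric] by (simp only: mult.left_commute)
  also have "\<dots> = c * (\<Sum>w\<in>V. A i v\<^sub>0 w * z\<^sub>1 w)"
    using z\<^sub>1(1) i v\<^sub>0(1) unfolding nonneg_eigvec_def by simp
  also have "\<dots> = (\<Sum>w\<in>V. A i v\<^sub>0 w * (c * z\<^sub>1 w))"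
    by (simp add: sum_distrib_left mult.left_commute)
  also have "\<dots> \<le> (\<Sum>w\<in>V. A i v\<^sub>0 w * z\<^sub>2 w)"
  proof (rule sum_mono)
    fix w assume "w \<in> V"
    show "A i v\<^sub>0 w * (c * z\<^sub>1 w) \<le> A i v\<^sub>0 w * z\<^sub>2 w"
      using le[OF \<open>w \<in> V\<close>] A unfolding edge_positive_def by (simp add: mult_left_mono)
  qed
  also have "\<dots> = \<sigma>\<^sub>2 i * z\<^sub>2 v\<^sub>0"
    using z\<^sub>2(1) i v\<^sub>0(1) unfolding nonneg_eigvec_def by simp
  finally show ?thesis
    using normalized_nonneg_eigvec_pos[OF A z\<^sub>2 v\<^sub>0(1)] by (rule mult_right_le_imp_le)
qed

text \<open>Perron--Frobenius uniqueness: subtracting the largest multiple of \<open>z\<^sub>1\<close> that stays below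
  \<open>z\<^sub>2\<close> leaves a nonnegative eigenvector with a zero entry, which must vanish.\<close>

lemma normalized_nonneg_eigvec_unique:
  assumes A: "edge_positive A"
    and z\<^sub>1: "nonneg_eigvec A z\<^sub>1 \<sigma>\<^sub>1" "(\<Sum>v\<in>V. z\<^sub>1 v) = 1"
    and z\<^sub>2: "nonneg_eigvec A z\<^sub>2 \<sigma>\<^sub>2" "(\<Sum>v\<in>V. z\<^sub>2 v) = 1"
    and v: "v \<in> V"
  shows "z\<^sub>1 v = z\<^sub>2 v"
proof -
  have \<sigma>: "\<sigma>\<^sub>1 i = \<sigma>\<^sub>2 i" if "i < k" for i
    using normalized_nonneg_eigvec_eigenvalue_le[OF A z\<^sub>1 z\<^sub>2 that]
      normalized_nonneg_eigvec_eigenvalue_le[OF A z\<^sub>2 z\<^sub>1 that] by simp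
  have "V \<noteq> {}"
    using v by auto
  moreover have "\<And>v. v \<in> V \<Longrightarrow> 0 < z\<^sub>1 v"
    by (rule normalized_nonneg_eigvec_pos[OF A z\<^sub>1])
  ultimately obtain c v\<^sub>0 where v\<^sub>0: "v\<^sub>0 \<in> V" "c * z\<^sub>1 v\<^sub>0 = z\<^sub>2 v\<^sub>0"
    and le: "\<And>v. v \<in> V \<Longrightarrow> c * z\<^sub>1 v \<le> z\<^sub>2 v"
    using min_ratio_witness[of V z\<^sub>1 z\<^sub>2, OF finite_V] by metis
  define z where "z w = z\<^sub>2 w - c * z\<^sub>1 w" for w
  have "nonneg_eigvec A z \<sigma>\<^sub>2"
    unfolding nonneg_eigvec_def
  proof (intro conjI ballI allI impI)
    fix i w assume iw: "i < k" "w \<in> V"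
    have "(\<Sum>u\<in>V. A i w u * z u) = (\<Sum>u\<in>V. A i w u * z\<^sub>2 u) - c * (\<Sum>u\<in>V. A i w u * z\<^sub>1 u)"
      unfolding z_def by (simp add: sum_subtractf sum_distrib_left algebra_simps)
    also have "\<dots> = \<sigma>\<^sub>2 i * z\<^sub>2 w - c * (\<sigma>\<^sub>1 i * z\<^sub>1 w)"
      using z\<^sub>1(1) z\<^sub>2(1) iw unfolding nonneg_eigvec_def by simp
    also have "\<dots> = \<sigma>\<^sub>2 i * z w"
      using \<sigma>[OF iw(1)] unfolding z_def by (simp add: algebra_simps)
    finally show "(\<Sum>u\<in>V. A i w u * z u) = \<sigma>\<^sub>2 i * z w" .
  qed (use le in \<open>simp add: z_def\<close>)
  then have "(\<forall>w\<in>V. z w = 0) \<or> (\<forall>w\<in>V. 0 < z w)"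
    by (rule nonneg_eigvec_zero_or_pos[OF A])
  moreover have "z v\<^sub>0 = 0"
    using v\<^sub>0(2) unfolding z_def by simp
  ultimately have z0: "\<And>w. w \<in> V \<Longrightarrow> z w = 0"
    using v\<^sub>0(1) by auto
  have "1 = c * (\<Sum>w\<in>V. z\<^sub>1 w)"
    using z\<^sub>2(2) z0 unfolding z_def by (simp add: sum_distrib_left)
  then have "c = 1"
    using z\<^sub>1(2) by simp
  then show ?thesis
    using z0[OF v] unfolding z_def by simp
qed

end

subsection \<open>Continuity in \<open>\<theta>\<close>\<close>

lemma Bmat_tendsto:
  "t \<longlonglongrightarrow> a \<Longrightarrow> (\<lambda>n. Bmat Mor r s d y (t n) i v w) \<longlonglongrightarrow> Bmat Mor r s d y a i v w"
  unfolding Bmat_def by (intro tendsto_intros)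

lemma continuous_on_Bmat: "continuous_on S (\<lambda>\<theta>. Bmat Mor r s d y \<theta> i v w)"
  unfolding Bmat_def by (intro continuous_intros)

locale cylinder_measures = strongly_connected_k_graph +
  fixes y :: "'a \<Rightarrow> real" and \<xi> :: "real \<Rightarrow> 'a \<Rightarrow> real"
    and \<mu> :: "real \<Rightarrow> ((nat \<Rightarrow> nat) \<Rightarrow> (nat \<Rightarrow> nat) \<Rightarrow> 'a) measure"
  assumes xi: "\<And>\<theta>. 0 \<le> \<theta> \<Longrightarrow> is_xi k Mor r s d y \<theta> (\<xi> \<theta>)"
    and mu: "\<And>\<theta>. 0 \<le> \<theta> \<Longrightarrow> is_mu k Mor r s cmp d y \<theta> (\<xi> \<theta>) (\<mu> \<theta>)"
begin

abbreviation "B \<theta> \<equiv> Bmat Mor r s d y \<theta>"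
abbreviation "\<rho> \<theta> \<equiv> rhoB k Mor r s d y \<theta>"

lemma xi_pos: "0 \<le> \<theta> \<Longrightarrow> v \<in> V \<Longrightarrow> 0 < \<xi> \<theta> v"
  using xi unfolding is_xi_def by simp

lemma xi_sum: "0 \<le> \<theta> \<Longrightarrow> (\<Sum>v\<in>V. \<xi> \<theta> v) = 1"
  using xi unfolding is_xi_def by simp

lemma xi_nonneg_eigvec: "0 \<le> \<theta> \<Longrightarrow> nonneg_eigvec (B \<theta>) (\<xi> \<theta>) (\<rho> \<theta>)"
  using xi xi_pos unfolding is_xi_def nonneg_eigvec_def by (simp add: less_imp_le)

lemma rho_eq_sum:
  "0 \<le> \<theta> \<Longrightarrow> i < k \<Longrightarrow> \<rho> \<theta> i = (\<Sum>v\<in>V. \<Sum>w\<in>V. B \<theta> i v w * \<xi> \<theta> w)"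
  by (rule eigenvalue_eq_sum[OF xi_nonneg_eigvec xi_sum])

text \<open>Along a sequence \<open>t n \<longrightarrow> a\<close>, every limit point of \<open>\<xi> (t n)\<close> is again a normalized
  nonnegative common eigenvector of the \<open>B a i\<close>, hence equals \<open>\<xi> a\<close>.\<close>

lemma continuous_on_xi:
  assumes v: "v \<in> V"
  shows "continuous_on {0..} (\<lambda>\<theta>. \<xi> \<theta> v)"
proof (rule continuous_on_sequentiallyI)
  fix t :: "nat \<Rightarrow> real" and a :: real
  assume t: "\<forall>n. t n \<in> {0..}" and a: "a \<in> {0..}" and lim: "t \<longlonglongrightarrow> a"
  show "(\<lambda>n. \<xi> (t n) v) \<longlonglongrightarrow> \<xi> a v"
  proof (rule tendsto_if_subseq_limits_unique[where I = V and M = 1])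
    show "finite V" by (rule finite_V)
    show "\<bar>\<xi> (t n) w\<bar> \<le> 1" if "w \<in> V" for n w
    proof -
      have "\<xi> (t n) w \<le> (\<Sum>u\<in>V. \<xi> (t n) u)"
        using finite_V that t xi_pos by (intro member_le_sum) (auto intro: less_imp_le)
      then show ?thesis
        using xi_sum xi_pos that t by (simp add: less_imp_le)
    qed
  next
    fix h L assume h: "strict_mono h" and L: "\<And>w. w \<in> V \<Longrightarrow> (\<lambda>n. \<xi> (t (h n)) w) \<longlonglongrightarrow> L w"
    have t0: "0 \<le> t (h n)" for n
      using t by simp
    have "(\<lambda>n. t (h n)) \<longlonglongrightarrow> a"
      using LIMSEQ_subseq_LIMSEQ[OF lim h] by (simp add: o_def)
    then have B_lim: "(\<lambda>n. B (t (h n)) i u w) \<longlonglongrightarrow> B a i u w" for i u w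
      by (rule Bmat_tendsto)
    have a0: "0 \<le> a"
      using a by simp
    note limit = normalized_nonneg_eigvec_limit[OF xi_nonneg_eigvec[OF t0] xi_sum[OF t0] B_lim L]
    show "L v = \<xi> a v"
      by (rule normalized_nonneg_eigvec_unique[OF edge_positive_Bmat limit
            xi_nonneg_eigvec[OF a0] xi_sum[OF a0] v])
  qed (rule v)
qed

lemma continuous_on_rho:
  assumes "i < k"
  shows "continuous_on {0..} (\<lambda>\<theta>. \<rho> \<theta> i)"
proof -
  have "continuous_on {0..} (\<lambda>\<theta>. \<Sum>v\<in>V. \<Sum>w\<in>V. B \<theta> i v w * \<xi> \<theta> w)"
    using continuous_on_xi by (intro continuous_on_sum continuous_on_mult continuous_on_Bmat) auto
  moreover have "continuous_on {0..} (\<lambda>\<theta>. \<rho> \<theta> i) =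
      continuous_on {0..} (\<lambda>\<theta>. \<Sum>v\<in>V. \<Sum>w\<in>V. B \<theta> i v w * \<xi> \<theta> w)"
    by (rule continuous_on_cong[OF refl]) (simp add: rho_eq_sum assms)
  ultimately show ?thesis by simp
qed

lemma mu_prob_space: "0 \<le> \<theta> \<Longrightarrow> prob_space (\<mu> \<theta>)"
  using mu unfolding is_mu_def by simp

lemma space_mu: "0 \<le> \<theta> \<Longrightarrow> space (\<mu> \<theta>) = paths"
  using mu topspace_path_topology unfolding is_mu_def by simp

lemma openin_sets_mu:
  assumes "0 \<le> \<theta>" "openin T U"
  shows "U \<in> sets (\<mu> \<theta>)"
proof -
  have "{U. openin T U} \<subseteq> Pow (topspace T)"
    using openin_subset by blast
  then have "sets (borel_of T) = sigma_sets (topspace T) {U. openin T U}"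
    unfolding borel_of_def by (rule sets_measure_of)
  moreover have "sets (\<mu> \<theta>) = sets (borel_of T)"
    using mu[OF assms(1)] unfolding is_mu_def by simp
  ultimately show ?thesis
    using assms(2) by auto
qed

lemma measure_mu_cyl:
  "0 \<le> \<theta> \<Longrightarrow> a \<in> Mor \<Longrightarrow>
    measure (\<mu> \<theta>) (Z a) = exp (- \<theta> * y a) / rhoB_pow k Mor r s d y \<theta> (d a) * \<xi> \<theta> (s a)"
  using mu unfolding is_mu_def by simp

lemma borel_measurable_mu:
  assumes "0 \<le> \<theta>" "continuous_map T euclideanreal f"
  shows "f \<in> borel_measurable (\<mu> \<theta>)"
proof (rule borel_measurableI)
  fix S :: "real set" assume "open S"
  then have "openin T {x \<in> topspace T. f x \<in> S}"
    by (intro openin_continuous_map_preimage[OF assms(2)]) simp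
  then have "{x \<in> topspace T. f x \<in> S} \<in> sets (\<mu> \<theta>)"
    by (rule openin_sets_mu[OF assms(1)])
  moreover have "f -` S \<inter> space (\<mu> \<theta>) = {x \<in> topspace T. f x \<in> S}"
    using space_mu[OF assms(1)] topspace_path_topology by blast
  ultimately show "f -` S \<inter> space (\<mu> \<theta>) \<in> sets (\<mu> \<theta>)"
    by simp
qed

lemma rho_pos:
  assumes "0 \<le> \<theta>" "i < k"
  shows "0 < \<rho> \<theta> i"
proof -
  obtain x where x: "x \<in> paths"
    using prob_space.not_empty[OF mu_prob_space[of 0]] space_mu[of 0] by auto
  have "unitv i \<in> natk k"
    using assms(2) by (simp add: natk_def unitv_def)
  then have e: "x zerok (unitv i) \<in> Mor" "d (x zerok (unitv i)) = unitv i"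
    using path_initial_segment[OF x] by simp_all
  have "0 < \<rho> \<theta> i * \<xi> \<theta> (r (x zerok (unitv i)))"
    using eigenvalue_mult_range_pos[OF edge_positive_Bmat xi_nonneg_eigvec[OF assms(1)] e(1) assms(2) e(2)]
      xi_pos[OF assms(1) s_in_V[OF e(1)]] by simp
  then show ?thesis
    using xi_pos[OF assms(1) r_in_V[OF e(1)]] by (simp add: zero_less_mult_iff)
qed

lemma continuous_on_measure_cyl:
  assumes a: "a \<in> Mor"
  shows "continuous_on {0..} (\<lambda>\<theta>. measure (\<mu> \<theta>) (Z a))"
proof -
  have "continuous_on {0..} (\<lambda>\<theta>. rhoB_pow k Mor r s d y \<theta> (d a))"
    unfolding rhoB_pow_def using continuous_on_rho
    by (intro continuous_on_prod continuous_on_power) auto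
  moreover have "rhoB_pow k Mor r s d y \<theta> (d a) \<noteq> 0" if "\<theta> \<in> {0..}" for \<theta>
    using rho_pos that unfolding rhoB_pow_def by (simp add: prod_pos less_imp_neq[symmetric])
  moreover have "continuous_on {0..} (\<lambda>\<theta>. exp (- \<theta> * y a))"
    by (intro continuous_intros)
  ultimately have "continuous_on {0..}
      (\<lambda>\<theta>. exp (- \<theta> * y a) / rhoB_pow k Mor r s d y \<theta> (d a) * \<xi> \<theta> (s a))"
    by (intro continuous_on_mult continuous_on_divide continuous_on_xi[OF s_in_V[OF a]]) auto
  moreover have "continuous_on {0..} (\<lambda>\<theta>. measure (\<mu> \<theta>) (Z a)) =
      continuous_on {0..} (\<lambda>\<theta>. exp (- \<theta> * y a) / rhoB_pow k Mor r s d y \<theta> (d a) * \<xi> \<theta> (s a))"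
    by (rule continuous_on_cong[OF refl]) (simp add: measure_mu_cyl a)
  ultimately show ?thesis by simp
qed

lemma continuous_on_integral:
  assumes f: "continuous_map T euclideanreal f"
  shows "continuous_on {0..} (\<lambda>\<theta>. integral\<^sup>L (\<mu> \<theta>) f)"
proof (rule continuous_on_if_uniformly_approximable)
  fix e :: real assume "e > 0"
  then obtain N where N: "N \<in> natk k"
    and osc: "\<And>x z. x \<in> paths \<Longrightarrow> z \<in> Z (x zerok N) \<Longrightarrow> \<bar>f z - f x\<bar> < e"
    using continuous_map_uniformly_on_cyls[OF f] by metis
  define G where "G \<theta> = (\<Sum>a\<in>{a \<in> Mor. d a = N}. f (cyl_point a) * measure (\<mu> \<theta>) (Z a))" for \<theta>
  have "continuous_on {0..} G"
    unfolding G_def using continuous_on_measure_cyl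
    by (intro continuous_on_sum continuous_on_mult continuous_on_const) auto
  moreover have "dist (G \<theta>) (integral\<^sup>L (\<mu> \<theta>) f) \<le> e" if "\<theta> \<in> {0..}" for \<theta>
  proof -
    have \<theta>: "0 \<le> \<theta>" using that by simp
    have "Z a \<in> sets (\<mu> \<theta>)" if "a \<in> Mor" for a
      using openin_sets_mu[OF \<theta> openin_cyl[OF that]] .
    from integral_approx_by_cyls[OF mu_prob_space[OF \<theta>] space_mu[OF \<theta>] this
        borel_measurable_mu[OF \<theta> f] N osc]
    show ?thesis
      unfolding G_def dist_real_def by (simp add: abs_minus_commute)
  qed
  ultimately show "\<exists>G. continuous_on {0..} G \<and> (\<forall>\<theta>\<in>{0..}. dist (G \<theta>) (integral\<^sup>L (\<mu> \<theta>) f) \<le> e)"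
    by blast
qed

end

theorem corollary3p7:
  fixes k :: nat and Mor :: "'a set" and r s :: "'a \<Rightarrow> 'a"
    and cmp :: "'a \<Rightarrow> 'a \<Rightarrow> 'a" and d :: "'a \<Rightarrow> nat \<Rightarrow> nat"
    and y :: "'a \<Rightarrow> real"
    and \<xi> :: "real \<Rightarrow> 'a \<Rightarrow> real"
    and \<mu> :: "real \<Rightarrow> ((nat \<Rightarrow> nat) \<Rightarrow> (nat \<Rightarrow> nat) \<Rightarrow> 'a) measure"
  assumes "kgraph k Mor r s cmp d"
    and "finite_kgraph k Mor d"
    and "strongly_connected Mor r s"
    and "Rplus_functor Mor r s cmp y"
    and "\<And>\<theta>. 0 \<le> \<theta> \<Longrightarrow> is_xi k Mor r s d y \<theta> (\<xi> \<theta>)"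
    and "\<And>\<theta>. 0 \<le> \<theta> \<Longrightarrow> is_mu k Mor r s cmp d y \<theta> (\<xi> \<theta>) (\<mu> \<theta>)"
  shows "\<forall>f. continuous_map (path_topology k Mor r s cmp d) euclideanreal f \<longrightarrow>
           continuous_on {0..} (\<lambda>\<theta>. integral\<^sup>L (\<mu> \<theta>) f)"
proof -
  interpret cylinder_measures k Mor r s cmp d y \<xi> \<mu>
    using assms(1-3,5,6) by unfold_locales
  show ?thesis
    using continuous_on_integral by blast
qed

end
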